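(* Let $3\le n\le k$ be integers, $\mu>0$ and $q\in[0,1]$, and let $X$ be the discrete-time Markov chain on $\mathbb{N}^{n-1}$ described in the context. If $X$ is stable with stationary distribution $\pi$, then the capacity $$C:=q\mu\,(k-(n-1))\sum_{\mathbf{x}\in R_0}\pi(\mathbf{x})$$ equals $C=\dfrac{q\mu k}{n}$.
   Context: $\mathbb{N}=\{0,1,2,\dots\}$. Vectors have dimension $n-1$; $\mathbf{0}$, $\mathbf{1}$ are the all-zero and all-one vectors, $\mathbf{e}_l$ the $l$-th unit vector. For $j=0,\dots,n-1$, $R_j$ is the set of $\mathbf{x}\in\mathbb{N}^{n-1}$ with exactly $j$ zero entries (so $R_0=\{\mathbf{x}:x_i\ge1\ \forall i\}$, $R_{n-1}=\{\mathbf{0}\}$). $X$ is the Markov chain on $\mathbb{N}^{n-1}$ with nonzero transition probabilities: from $\mathbf{x}\in R_0$, to $\mathbf{x}-\mathbf{1}$ w.p. $\frac{k-(n-1)}{k}$ and to $\mathbf{x}+\mathbf{e}_l$ w.p. $\frac1k$ ($l=1,\dots,n-1$); from $\mathbf{x}\in R_j$, $1\le j\le n-2$, to $\mathbf{x}+\mathbf{e}_l$ w.p. $\frac{k-(n-1-j)}{kj}$ if $x_l=0$ and w.p. $\frac1k$ if $x_l\ge1$; from $\mathbf{0}$ to $\mathbf{e}_l$ w.p. $\frac1{n-1}$. It is the uniformization at rate $k\mu$ of a continuous-time chain modelling a switch with $k$ identical links each generating Bell pairs at rate $\mu$, which performs an $n$-party swap (succeeding w.p. $q$) when $n$ distinct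 links hold pairs. Stable means positive recurrent. *)

theory Defs
  imports "HOL-Analysis.Analysis"
begin

text \<open>States: vectors in N^(n-1), represented as functions nat => nat that vanish
  at every index >= n-1 (coordinates are indexed 0..n-2).\<close>

definition states :: "nat \<Rightarrow> (nat \<Rightarrow> nat) set" where
  "states n = {x. \<forall>i. n - 1 \<le> i \<longrightarrow> x i = 0}"

definition nzeros :: "nat \<Rightarrow> (nat \<Rightarrow> nat) \<Rightarrow> nat" where
  "nzeros n x = card {i. i < n - 1 \<and> x i = 0}"

definition region :: "nat \<Rightarrow> nat \<Rightarrow> (nat \<Rightarrow> nat) set" where
  "region n j = {x \<in> states n. nzeros n x = j}"

definition unitvec :: "nat \<Rightarrow> nat \<Rightarrow> nat" where
  "unitvec l = (\<lambda>i. if i = l then 1 else 0)"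

definition trans_prob :: "nat \<Rightarrow> nat \<Rightarrow> (nat \<Rightarrow> nat) \<Rightarrow> (nat \<Rightarrow> nat) \<Rightarrow> real" where
  "trans_prob n k x y =
    (if x \<notin> states n \<or> y \<notin> states n then 0
     else if nzeros n x = 0 then
       (if y = (\<lambda>i. x i - 1) then (real k - (real n - 1)) / real k else 0)
       + (\<Sum>l<n - 1. if y = (\<lambda>i. x i + unitvec l i) then 1 / real k else 0)
     else if nzeros n x = n - 1 then
       (\<Sum>l<n - 1. if y = unitvec l then 1 / (real n - 1) else 0)
     else
       (\<Sum>l<n - 1. if y = (\<lambda>i. x i + unitvec l i) then
          (if x l = 0
           then (real k - (real n - 1 - real (nzeros n x))) / (real k * real (nzeros n x))
           else 1 / real k)
        else 0))"

text \<open>Probability, starting from z, that the first visit to x0 (at a time >= 1)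
  happens at step Suc m.\<close>
fun first_hit :: "nat \<Rightarrow> nat \<Rightarrow> (nat \<Rightarrow> nat) \<Rightarrow> nat \<Rightarrow> (nat \<Rightarrow> nat) \<Rightarrow> real" where
  "first_hit n k x0 0 z = trans_prob n k z x0"
| "first_hit n k x0 (Suc m) z =
     infsum (\<lambda>w. trans_prob n k z w * first_hit n k x0 m w) (states n - {x0})"

text \<open>A state is positive recurrent if the return time is a.s. finite and has
  finite mean; the chain is positive recurrent (chain_stable) if all states are.\<close>
definition pos_recurrent_state :: "nat \<Rightarrow> nat \<Rightarrow> (nat \<Rightarrow> nat) \<Rightarrow> bool" where
  "pos_recurrent_state n k x0 \<longleftrightarrow>
     (\<lambda>m. first_hit n k x0 m x0) sums 1 \<and>
     summable (\<lambda>m. real (Suc m) * first_hit n k x0 m x0)"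

definition chain_stable :: "nat \<Rightarrow> nat \<Rightarrow> bool" where
  "chain_stable n k \<longleftrightarrow> (\<forall>x \<in> states n. pos_recurrent_state n k x)"

definition stationary :: "nat \<Rightarrow> nat \<Rightarrow> ((nat \<Rightarrow> nat) \<Rightarrow> real) \<Rightarrow> bool" where
  "stationary n k \<pi> \<longleftrightarrow>
     (\<forall>x. \<pi> x \<ge> 0) \<and> (\<forall>x. x \<notin> states n \<longrightarrow> \<pi> x = 0) \<and>
     (\<pi> has_sum 1) (states n) \<and>
     (\<forall>y \<in> states n. ((\<lambda>x. \<pi> x * trans_prob n k x y) has_sum \<pi> y) (states n))"

end

theory Submission
  imports Defs
begin

text \<open>Call the coordinate sum of a state its level. Every transition raises the level by one,
  except the jump \<open>x \<mapsto> x - 1\<close> out of \<open>R\<^sub>0\<close> (probability \<open>c = (k - (n - 1)) / k\<close>), which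
  lowers it by \<open>n - 1\<close>. Summing the balance equations over the finite set of states of level
  at most \<open>j\<close> therefore gives the flow balance across level \<open>j\<close>:
  \<open>\<pi>(level = j) = c \<pi>(R\<^sub>0 \<inter> {j \<le> level \<le> j + n - 1})\<close>. Summing over \<open>j\<close>, every state of \<open>R\<^sub>0\<close> is
  counted \<open>n\<close> times on the right, so \<open>1 = c n \<pi>(R\<^sub>0)\<close>.\<close>

lemma has_sum_diff:
  fixes f g :: "'a \<Rightarrow> 'b::{topological_ab_group_add, t2_space}"
  assumes "(f has_sum a) A" and "(g has_sum b) A"
  shows "((\<lambda>x. f x - g x) has_sum (a - b)) A"
proof -
  have "((\<lambda>x. - g x) has_sum - b) A"
    by (rule has_sum_uminus[THEN iffD2]) (simp add: assms(2))
  from has_sum_add[OF assms(1) this] show ?thesis by simp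
qed

lemma has_sum_sum:
  fixes f :: "'i \<Rightarrow> 'a \<Rightarrow> 'b::topological_comm_monoid_add"
  assumes "finite I" and "\<And>i. i \<in> I \<Longrightarrow> (f i has_sum s i) A"
  shows "((\<lambda>x. \<Sum>i\<in>I. f i x) has_sum (\<Sum>i\<in>I. s i)) A"
  using assms by (induction I rule: finite_induct) (auto intro: has_sum_add)

lemma has_sum_of_bool_finite:
  fixes f :: "'a \<Rightarrow> real"
  assumes "finite {x \<in> A. P x}"
  shows "((\<lambda>x. f x * of_bool (P x)) has_sum sum f {x \<in> A. P x}) A"
  using assms by (intro has_sum_finite_neutralI) auto

lemma nonneg_has_sum_swap:
  fixes f :: "'a \<Rightarrow> 'b \<Rightarrow> real"
  assumes nonneg: "\<And>x y. x \<in> A \<Longrightarrow> y \<in> B \<Longrightarrow> f x y \<ge> 0"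
    and rows: "\<And>x. x \<in> A \<Longrightarrow> (f x has_sum g x) B"
    and total: "(g has_sum s) A"
  shows "((\<lambda>y. \<Sum>\<^sub>\<infinity>x\<in>A. f x y) has_sum s) B"
proof -
  have summable: "(\<lambda>(x, y). f x y) summable_on A \<times> B"
    by (rule summable_on_SigmaI[where g = g])
       (simp_all add: rows nonneg has_sum_imp_summable[OF total])
  have "((\<lambda>(x, y). f x y) has_sum s) (A \<times> B)"
    by (rule has_sum_SigmaI[where g = g]) (simp_all add: rows total summable)
  from has_sum_swap[THEN iffD1, OF this]
  have swapped: "((\<lambda>(y, x). f x y) has_sum s) (B \<times> A)"
    by (simp only: case_prod_conv)
  have "(\<lambda>x. f x y) summable_on A" if "y \<in> B" for y
    using summable_on_SigmaD1[of "\<lambda>y x. f x y", OF has_sum_imp_summable[OF swapped] that] .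
  then show ?thesis
    by (intro has_sum_SigmaD[OF swapped]) simp
qed

lemma nonneg_has_sum_fibres:
  fixes f :: "'a \<Rightarrow> real" and h :: "'a \<Rightarrow> 'b"
  assumes "\<And>x. x \<in> A \<Longrightarrow> f x \<ge> 0" and "(f has_sum s) A"
  shows "((\<lambda>j. \<Sum>\<^sub>\<infinity>x\<in>A. f x * of_bool (h x = j)) has_sum s) UNIV"
proof (rule nonneg_has_sum_swap[OF _ _ assms(2)])
  show "((\<lambda>j. f x * of_bool (h x = j)) has_sum f x) UNIV" for x
    by (rule has_sum_finite_neutralI[where B = "{h x}"]) auto
qed (simp add: assms(1))

lemma has_sum_window:
  fixes d l :: nat
  assumes "d \<le> l"
  shows "((\<lambda>j. of_bool (j \<le> l \<and> l \<le> j + d) :: real) has_sum real (d + 1)) UNIV"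
proof (rule has_sum_finite_neutralI[where B = "{l - d..l}"])
  have "(\<Sum>j\<in>{l - d..l}. of_bool (j \<le> l \<and> l \<le> j + d) :: real) = (\<Sum>j\<in>{l - d..l}. 1)"
    using assms by (intro sum.cong) auto
  then show "real (d + 1) = (\<Sum>j\<in>{l - d..l}. of_bool (j \<le> l \<and> l \<le> j + d))"
    using assms by simp
qed auto

definition level :: "nat \<Rightarrow> (nat \<Rightarrow> nat) \<Rightarrow> nat" where
  "level n x = (\<Sum>i<n - 1. x i)"

definition down_jump_spans :: "nat \<Rightarrow> nat \<Rightarrow> (nat \<Rightarrow> nat) \<Rightarrow> bool" where
  "down_jump_spans n j x \<longleftrightarrow> nzeros n x = 0 \<and> j \<le> level n x \<and> level n x \<le> j + (n - 1)"

lemma finite_states_level_le: "finite {y \<in> states n. level n y \<le> j}"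
proof (rule finite_subset[OF _ finite_set_of_finite_funs[of "{..<n - 1}" "{..j}" 0]])
  show "{y \<in> states n. level n y \<le> j} \<subseteq>
      {f. \<forall>i. (i \<in> {..<n - 1} \<longrightarrow> f i \<in> {..j}) \<and> (i \<notin> {..<n - 1} \<longrightarrow> f i = 0)}"
  proof (intro subsetI CollectI allI conjI impI)
    fix y i
    assume y: "y \<in> {y \<in> states n. level n y \<le> j}"
    show "y i \<in> {..j}" if "i \<in> {..<n - 1}"
      using y member_le_sum[OF that, of y] by (simp add: level_def)
    show "y i = 0" if "i \<notin> {..<n - 1}"
      using y that by (simp add: states_def)
  qed
qed simp_all

lemma nzeros_le: "nzeros n x \<le> n - 1"
  unfolding nzeros_def by (rule order.trans[OF card_mono[of "{..<n - 1}"]]) auto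

lemma nonzero_if_nzeros_0:
  assumes "nzeros n x = 0" and "i < n - 1"
  shows "x i \<noteq> 0"
proof
  assume "x i = 0"
  with assms(2) have "i \<in> {i. i < n - 1 \<and> x i = 0}" by simp
  moreover have "finite {i. i < n - 1 \<and> x i = 0}" by simp
  ultimately have "nzeros n x \<noteq> 0"
    unfolding nzeros_def by (metis card_0_eq empty_iff)
  with assms(1) show False by simp
qed

lemma zero_if_nzeros_full: "nzeros n x = n - 1 \<Longrightarrow> i < n - 1 \<Longrightarrow> x i = 0"
proof -
  assume full: "nzeros n x = n - 1" and i: "i < n - 1"
  have "{i. i < n - 1 \<and> x i = 0} = {..<n - 1}"
    by (rule card_subset_eq) (use full in \<open>auto simp: nzeros_def\<close>)
  then show ?thesis using i by auto
qed

lemma states_decrement: "x \<in> states n \<Longrightarrow> (\<lambda>i. x i - 1) \<in> states n"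
  by (auto simp: states_def)

lemma states_increment: "x \<in> states n \<Longrightarrow> l < n - 1 \<Longrightarrow> (\<lambda>i. x i + unitvec l i) \<in> states n"
  by (auto simp: states_def unitvec_def)

lemma unitvec_in_states: "l < n - 1 \<Longrightarrow> unitvec l \<in> states n"
  by (auto simp: states_def unitvec_def)

lemma level_increment: "l < n - 1 \<Longrightarrow> level n (\<lambda>i. x i + unitvec l i) = level n x + 1"
  by (simp add: level_def sum.distrib unitvec_def)

lemma level_unitvec: "l < n - 1 \<Longrightarrow> level n (unitvec l) = 1"
  by (simp add: level_def unitvec_def)

lemma level_eq_0_if_nzeros_full: "nzeros n x = n - 1 \<Longrightarrow> level n x = 0"
  using zero_if_nzeros_full[of n x] by (simp add: level_def)

lemma level_ge_if_nzeros_0: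
  assumes "nzeros n x = 0"
  shows "n - 1 \<le> level n x"
proof -
  have "1 \<le> x i" if "i \<in> {..<n - 1}" for i
    using that nonzero_if_nzeros_0[OF assms, of i] by simp
  then have "(\<Sum>i<n - 1. 1) \<le> (\<Sum>i<n - 1. x i)"
    by (rule sum_mono)
  then show ?thesis
    by (simp add: level_def)
qed

lemma level_decrement:
  assumes "nzeros n x = 0"
  shows "level n (\<lambda>i. x i - 1) = level n x - (n - 1)"
proof -
  have "1 \<le> x i" if "i \<in> {..<n - 1}" for i
    using that nonzero_if_nzeros_0[OF assms, of i] by simp
  then have "(\<Sum>i<n - 1. x i - 1) = (\<Sum>i<n - 1. x i) - (\<Sum>i<n - 1. 1)"
    by (rule sum_subtractf_nat)
  then show ?thesis
    by (simp add: level_def)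
qed

lemma sum_sum_if_eq:
  fixes g :: "nat \<Rightarrow> 'a" and a :: "nat \<Rightarrow> real"
  assumes "finite A"
  shows "(\<Sum>y\<in>A. \<Sum>l<m. if y = g l then a l else 0) = (\<Sum>l<m. if g l \<in> A then a l else 0)"
  using assms by (subst sum.swap) simp

lemma sum_trans_prob:
  assumes "x \<in> states n" and "finite A" and "A \<subseteq> states n"
  shows "(\<Sum>y\<in>A. trans_prob n k x y) =
    (if nzeros n x = 0 then
       (if (\<lambda>i. x i - 1) \<in> A then (real k - (real n - 1)) / real k else 0)
       + (\<Sum>l<n - 1. if (\<lambda>i. x i + unitvec l i) \<in> A then 1 / real k else 0)
     else if nzeros n x = n - 1 then
       (\<Sum>l<n - 1. if unitvec l \<in> A then 1 / (real n - 1) else 0)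
     else
       (\<Sum>l<n - 1. if (\<lambda>i. x i + unitvec l i) \<in> A then
          (if x l = 0
           then (real k - (real n - 1 - real (nzeros n x))) / (real k * real (nzeros n x))
           else 1 / real k)
        else 0))"
proof -
  have "(\<Sum>y\<in>A. trans_prob n k x y) = (\<Sum>y\<in>A.
    (if nzeros n x = 0 then
       (if y = (\<lambda>i. x i - 1) then (real k - (real n - 1)) / real k else 0)
       + (\<Sum>l<n - 1. if y = (\<lambda>i. x i + unitvec l i) then 1 / real k else 0)
     else if nzeros n x = n - 1 then
       (\<Sum>l<n - 1. if y = unitvec l then 1 / (real n - 1) else 0)
     else
       (\<Sum>l<n - 1. if y = (\<lambda>i. x i + unitvec l i) then
          (if x l = 0
           then (real k - (real n - 1 - real (nzeros n x))) / (real k * real (nzeros n x))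
           else 1 / real k)
        else 0)))"
    using assms by (intro sum.cong) (auto simp: trans_prob_def)
  then show ?thesis
    using assms(2) by (simp add: sum.distrib sum_sum_if_eq)
qed

lemma sum_increment_probs_eq_1:
  assumes "n \<le> k" and "nzeros n x \<noteq> 0"
  shows "(\<Sum>l<n - 1. if x l = 0
           then (real k - (real n - 1 - real (nzeros n x))) / (real k * real (nzeros n x))
           else 1 / real k) = 1"
proof -
  define z where "z = nzeros n x"
  define a where "a = (real k - (real n - 1 - real z)) / (real k * real z)"
  define Z where "Z = {i. i < n - 1 \<and> x i = 0}"
  have card_Z: "card Z = z" by (simp add: Z_def z_def nzeros_def)
  have zeros: "{..<n - 1} \<inter> {l. x l = 0} = Z" and nonzeros: "{..<n - 1} \<inter> - {l. x l = 0} = {..<n - 1} - Z"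
    by (auto simp: Z_def)
  have card_nonzeros: "card ({..<n - 1} - Z) = n - 1 - z"
    using card_Z by (subst card_Diff_subset) (auto simp: Z_def)
  have "(\<Sum>l<n - 1. if x l = 0 then a else 1 / real k) = real (card Z) * a + real (card ({..<n - 1} - Z)) / real k"
    using sum.If_cases[of "{..<n - 1}" "\<lambda>l. x l = 0" "\<lambda>_. a" "\<lambda>_. 1 / real k"]
    unfolding zeros nonzeros by simp
  also have "\<dots> = real z * a + real (n - 1 - z) / real k"
    by (simp only: card_Z card_nonzeros)
  also have "\<dots> = 1"
    using assms nzeros_le[of n x] by (simp add: a_def z_def field_simps of_nat_diff)
  finally show ?thesis unfolding a_def z_def .
qed

lemma sum_trans_prob_level_le_interior:
  assumes "3 \<le> n" and "n \<le> k" and x: "x \<in> states n" and interior: "nzeros n x = 0"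
  shows "(\<Sum>y\<in>{y \<in> states n. level n y \<le> j}. trans_prob n k x y) =
    of_bool (level n x < j) + (real k - (real n - 1)) / real k * of_bool (down_jump_spans n j x)"
proof -
  let ?A = "{y \<in> states n. level n y \<le> j}"
  have "?A \<subseteq> states n" by blast
  note sum_A = sum_trans_prob[OF x finite_states_level_le this, of k]
  have down: "(\<lambda>i. x i - 1) \<in> ?A \<longleftrightarrow> level n x \<le> j + (n - 1)"
    using states_decrement[OF x] level_decrement[OF interior] level_ge_if_nzeros_0[OF interior]
    by auto
  have "(\<Sum>l<n - 1. if (\<lambda>i. x i + unitvec l i) \<in> ?A then 1 / real k else 0)
      = (\<Sum>l<n - 1. of_bool (level n x < j) / real k)"
    by (rule sum.cong) (auto simp: states_increment[OF x] level_increment Suc_le_eq)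
  also have "\<dots> = of_bool (level n x < j) * ((real n - 1) / real k)"
    using assms(1) by (simp add: of_nat_diff)
  finally have increments: "(\<Sum>l<n - 1. if (\<lambda>i. x i + unitvec l i) \<in> ?A then 1 / real k else 0)
      = of_bool (level n x < j) * ((real n - 1) / real k)" .
  have "(\<Sum>y\<in>?A. trans_prob n k x y) =
      (if (\<lambda>i. x i - 1) \<in> ?A then (real k - (real n - 1)) / real k else 0) +
      (\<Sum>l<n - 1. if (\<lambda>i. x i + unitvec l i) \<in> ?A then 1 / real k else 0)"
    using sum_A interior by simp
  also have "\<dots> = of_bool (level n x \<le> j + (n - 1)) * ((real k - (real n - 1)) / real k) +
      of_bool (level n x < j) * ((real n - 1) / real k)"
    unfolding down increments by simp
  finally have "(\<Sum>y\<in>?A. trans_prob n k x y) = \<dots>" .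
  moreover have "(real k - (real n - 1)) / real k + (real n - 1) / real k = 1"
    using assms(1,2) by (simp add: field_simps)
  ultimately show ?thesis
    using interior level_ge_if_nzeros_0[OF interior]
    by (cases "level n x < j") (auto simp: down_jump_spans_def)
qed

lemma sum_trans_prob_level_le_origin:
  assumes "3 \<le> n" and x: "x \<in> states n" and origin: "nzeros n x = n - 1"
  shows "(\<Sum>y\<in>{y \<in> states n. level n y \<le> j}. trans_prob n k x y) =
    of_bool (level n x < j) + (real k - (real n - 1)) / real k * of_bool (down_jump_spans n j x)"
proof -
  let ?A = "{y \<in> states n. level n y \<le> j}"
  have "?A \<subseteq> states n" by blast
  note sum_A = sum_trans_prob[OF x finite_states_level_le this, of k]
  have "(\<Sum>y\<in>?A. trans_prob n k x y) =
      (\<Sum>l<n - 1. if unitvec l \<in> ?A then 1 / (real n - 1) else 0)"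
    using sum_A origin assms(1) by simp
  also have "\<dots> = (\<Sum>l<n - 1. of_bool (0 < j) / (real n - 1))"
    by (rule sum.cong) (auto simp: unitvec_in_states level_unitvec)
  finally show ?thesis
    using origin assms(1) level_eq_0_if_nzeros_full[OF origin]
    by (simp add: down_jump_spans_def of_nat_diff)
qed

lemma sum_trans_prob_level_le_boundary:
  assumes "n \<le> k" and x: "x \<in> states n"
    and boundary: "nzeros n x \<noteq> 0" "nzeros n x \<noteq> n - 1"
  shows "(\<Sum>y\<in>{y \<in> states n. level n y \<le> j}. trans_prob n k x y) =
    of_bool (level n x < j) + (real k - (real n - 1)) / real k * of_bool (down_jump_spans n j x)"
proof -
  let ?A = "{y \<in> states n. level n y \<le> j}"
  have "?A \<subseteq> states n" by blast
  note sum_A = sum_trans_prob[OF x finite_states_level_le this, of k]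
  have "(\<Sum>y\<in>?A. trans_prob n k x y) =
      (\<Sum>l<n - 1. if (\<lambda>i. x i + unitvec l i) \<in> ?A then
        (if x l = 0
         then (real k - (real n - 1 - real (nzeros n x))) / (real k * real (nzeros n x))
         else 1 / real k)
      else 0)"
    using sum_A boundary by simp
  also have "\<dots> = of_bool (level n x < j) * (\<Sum>l<n - 1. if x l = 0
         then (real k - (real n - 1 - real (nzeros n x))) / (real k * real (nzeros n x))
         else 1 / real k)"
    unfolding sum_distrib_left by (rule sum.cong) (auto simp: states_increment[OF x] level_increment Suc_le_eq)
  finally show ?thesis
    using boundary sum_increment_probs_eq_1[OF assms(1)] by (simp add: down_jump_spans_def)
qed

lemma sum_trans_prob_level_le:
  assumes "3 \<le> n" and "n \<le> k" and "x \<in> states n"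
  shows "(\<Sum>y\<in>{y \<in> states n. level n y \<le> j}. trans_prob n k x y) =
    of_bool (level n x < j) + (real k - (real n - 1)) / real k * of_bool (down_jump_spans n j x)"
proof -
  consider "nzeros n x = 0" | "nzeros n x = n - 1" | "nzeros n x \<noteq> 0" "nzeros n x \<noteq> n - 1"
    by blast
  then show ?thesis
  proof cases
    case 1
    then show ?thesis by (rule sum_trans_prob_level_le_interior[OF assms])
  next
    case 2
    then show ?thesis by (rule sum_trans_prob_level_le_origin[OF assms(1,3)])
  next
    case 3
    then show ?thesis by (rule sum_trans_prob_level_le_boundary[OF assms(2,3)])
  qed
qed

lemma stationary_level_flow:
  assumes "3 \<le> n" and "n \<le> k" and "stationary n k \<pi>"
  shows "(\<Sum>\<^sub>\<infinity>x\<in>states n. \<pi> x * of_bool (level n x = j)) =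
    (\<Sum>\<^sub>\<infinity>x\<in>states n. (real k - (real n - 1)) / real k * \<pi> x * of_bool (down_jump_spans n j x))"
proof -
  define c where "c = (real k - (real n - 1)) / real k"
  define A where "A = {y \<in> states n. level n y \<le> j}"
  define B where "B = {y \<in> states n. level n y < j}"
  have balance: "((\<lambda>x. \<pi> x * trans_prob n k x y) has_sum \<pi> y) (states n)" if "y \<in> states n" for y
    using assms(3) that by (simp add: stationary_def)
  have finite_A: "finite A"
    unfolding A_def by (rule finite_states_level_le)
  have finite_B: "finite B"
    by (rule finite_subset[OF _ finite_A]) (auto simp: A_def B_def)
  have balance_A: "((\<lambda>x. \<Sum>y\<in>A. \<pi> x * trans_prob n k x y) has_sum sum \<pi> A) (states n)"
    by (rule has_sum_sum[OF finite_A balance]) (simp add: A_def)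
  have transitions: "(\<Sum>y\<in>A. \<pi> x * trans_prob n k x y) =
      \<pi> x * of_bool (level n x < j) + c * \<pi> x * of_bool (down_jump_spans n j x)" if "x \<in> states n" for x
  proof -
    have "(\<Sum>y\<in>A. \<pi> x * trans_prob n k x y) = \<pi> x * (\<Sum>y\<in>A. trans_prob n k x y)"
      by (simp only: sum_distrib_left)
    also have "\<dots> = \<pi> x * (of_bool (level n x < j) + c * of_bool (down_jump_spans n j x))"
      unfolding A_def c_def sum_trans_prob_level_le[OF assms(1,2) that] ..
    also have "\<dots> = \<pi> x * of_bool (level n x < j) + c * \<pi> x * of_bool (down_jump_spans n j x)"
      by (simp add: algebra_simps)
    finally show ?thesis .
  qed
  have into_A:
    "((\<lambda>x. \<pi> x * of_bool (level n x < j) + c * \<pi> x * of_bool (down_jump_spans n j x)) has_sum sum \<pi> A) (states n)"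
    using has_sum_cong[THEN iffD1, OF transitions balance_A] .
  have in_A: "((\<lambda>x. \<pi> x * of_bool (level n x \<le> j)) has_sum sum \<pi> A) (states n)"
    using has_sum_of_bool_finite[where f = \<pi>, OF finite_A[unfolded A_def]] unfolding A_def .
  have in_B: "((\<lambda>x. \<pi> x * of_bool (level n x < j)) has_sum sum \<pi> B) (states n)"
    using has_sum_of_bool_finite[where f = \<pi>, OF finite_B[unfolded B_def]] unfolding B_def .
  have "\<pi> x * of_bool (level n x \<le> j) - \<pi> x * of_bool (level n x < j) = \<pi> x * of_bool (level n x = j)"
    for x by (cases "level n x" j rule: linorder_cases) simp_all
  with has_sum_diff[OF in_A in_B]
  have at_j: "((\<lambda>x. \<pi> x * of_bool (level n x = j)) has_sum (sum \<pi> A - sum \<pi> B)) (states n)"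
    by simp
  from has_sum_diff[OF into_A in_B]
  have crossing_down: "((\<lambda>x. c * \<pi> x * of_bool (down_jump_spans n j x)) has_sum (sum \<pi> A - sum \<pi> B)) (states n)"
    by simp
  from infsumI[OF at_j] infsumI[OF crossing_down] show ?thesis
    unfolding c_def by (rule trans[OF _ sym])
qed

lemma stationary_has_sum_down_jump_spans:
  fixes c :: real
  assumes "1 \<le> n" and "c \<ge> 0" and "stationary n k \<pi>"
  shows "((\<lambda>j. \<Sum>\<^sub>\<infinity>x\<in>states n. c * \<pi> x * of_bool (down_jump_spans n j x))
    has_sum c * infsum \<pi> (region n 0) * real n) UNIV"
proof (rule nonneg_has_sum_swap[where g = "\<lambda>x. c * (\<pi> x * of_bool (nzeros n x = 0)) * real n"])
  have \<pi>_nonneg: "\<And>x. \<pi> x \<ge> 0" and \<pi>_total: "(\<pi> has_sum 1) (states n)"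
    using assms(3) by (auto simp: stationary_def)
  show "\<And>x j. 0 \<le> c * \<pi> x * of_bool (down_jump_spans n j x)"
    using assms(2) \<pi>_nonneg by simp
  show "((\<lambda>j. c * \<pi> x * of_bool (down_jump_spans n j x))
      has_sum c * (\<pi> x * of_bool (nzeros n x = 0)) * real n) UNIV" for x
  proof (cases "nzeros n x = 0")
    case True
    have "n - 1 + 1 = n" using assms(1) by simp
    with has_sum_cmult_right[OF has_sum_window[OF level_ge_if_nzeros_0[OF True]], of "c * \<pi> x"]
    show ?thesis by (simp add: down_jump_spans_def True)
  qed (simp add: down_jump_spans_def)
  have "\<pi> summable_on region n 0"
    by (rule summable_on_subset[OF has_sum_imp_summable[OF \<pi>_total]]) (auto simp: region_def)
  then have "(\<pi> has_sum infsum \<pi> (region n 0)) (region n 0)"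
    by (rule has_sum_infsum)
  then have "((\<lambda>x. \<pi> x * of_bool (nzeros n x = 0)) has_sum infsum \<pi> (region n 0)) (states n)"
    by (rule has_sum_cong_neutral[THEN iffD1, rotated -1]) (auto simp: region_def)
  then show "((\<lambda>x. c * (\<pi> x * of_bool (nzeros n x = 0)) * real n)
      has_sum c * infsum \<pi> (region n 0) * real n) (states n)"
    by (intro has_sum_cmult_left has_sum_cmult_right)
qed

theorem proposition5p1:
  fixes n k :: nat and \<mu> q :: real and \<pi> :: "(nat \<Rightarrow> nat) \<Rightarrow> real"
  assumes "3 \<le> n" and "n \<le> k" and "\<mu> > 0" and "0 \<le> q" and "q \<le> 1"
    and "chain_stable n k" and "stationary n k \<pi>"
  shows "q * \<mu> * (real k - (real n - 1)) * infsum \<pi> (region n 0) = q * \<mu> * real k / real n"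
proof -
  define c where "c = (real k - (real n - 1)) / real k"
  define p where "p = infsum \<pi> (region n 0)"
  have c_nonneg: "c \<ge> 0" and "1 \<le> n"
    using assms(1,2) by (simp_all add: c_def)
  have "((\<lambda>j. \<Sum>\<^sub>\<infinity>x\<in>states n. \<pi> x * of_bool (level n x = j)) has_sum 1) UNIV"
    by (rule nonneg_has_sum_fibres) (use assms(7) in \<open>auto simp: stationary_def\<close>)
  then have "((\<lambda>j. \<Sum>\<^sub>\<infinity>x\<in>states n. c * \<pi> x * of_bool (down_jump_spans n j x)) has_sum 1) UNIV"
    by (rule has_sum_cong[THEN iffD1, rotated])
       (simp only: c_def stationary_level_flow[OF assms(1,2,7)])
  from has_sum_unique[OF this stationary_has_sum_down_jump_spans[OF \<open>1 \<le> n\<close> c_nonneg assms(7)]]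
  have "1 = c * p * real n"
    unfolding p_def .
  then have p_eq: "(real k - (real n - 1)) * p = real k / real n"
    using assms(1,2) by (simp add: c_def field_simps)
  have "q * \<mu> * (real k - (real n - 1)) * p = q * \<mu> * ((real k - (real n - 1)) * p)"
    by (simp only: mult.assoc)
  also have "\<dots> = q * \<mu> * real k / real n"
    unfolding p_eq by simp
  finally show ?thesis
    unfolding p_def .
qed

end
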